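(* Let $\Delta$ be a thick building and let $G$ be a group acting strongly transitively on $\Delta$ with respect to the complete apartment system $\overline{\mathcal{A}}$. Fix an apartment $\Sigma_0\in\overline{\mathcal{A}}$, let $N=\mathrm{Stab}_G(\Sigma_0)$ and $T=\{t\in N\mid tC=C \text{ for all chambers } C \text{ of }\Sigma_0\}$. If there exists $n_0\in N\setminus T$ such that every element of the coset $n_0T$ has finite order in $G$, then no torsionfree subgroup of $G$ acts weakly transitively on $\Delta$.
   Context: $\overline{\mathcal{A}}$ is the set of all apartments of $\Delta$. A type-preserving action of $G$ on $\Delta$ is strongly transitive with respect to a system of apartments $\mathcal{A}$ if it is transitive on pairs $(C,\Sigma)$ with $\Sigma\in\mathcal{A}$ and $C$ a chamber of $\Sigma$. A type-preserving action of a group $H$ on $\Delta$ is weakly transitive if there is an apartment $\Sigma\in\overline{\mathcal{A}}$ such that $\mathrm{Stab}_H(\Sigma)$ acts transitively on the set of chambers of $\Sigma$. *)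

theory Defs
  imports "HOL-Algebra.Algebra"
begin

definition wprod :: "('w, 'm) monoid_scheme \<Rightarrow> 'w list \<Rightarrow> 'w" where
  "wprod W xs = foldr (\<lambda>s acc. s \<otimes>\<^bsub>W\<^esub> acc) xs \<one>\<^bsub>W\<^esub>"

definition cox_len :: "('w, 'm) monoid_scheme \<Rightarrow> 'w set \<Rightarrow> 'w \<Rightarrow> nat" where
  "cox_len W S w = (LEAST n. \<exists>xs. length xs = n \<and> set xs \<subseteq> S \<and> wprod W xs = w)"

text \<open>Coxeter system: group generated by involutions S satisfying the exchange condition (E).\<close>
definition coxeter_system :: "('w, 'm) monoid_scheme \<Rightarrow> 'w set \<Rightarrow> bool" where
  "coxeter_system W S \<longleftrightarrow> group W \<and> S \<subseteq> carrier W \<and>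
     (\<forall>s\<in>S. s \<noteq> \<one>\<^bsub>W\<^esub> \<and> s \<otimes>\<^bsub>W\<^esub> s = \<one>\<^bsub>W\<^esub>) \<and>
     generate W S = carrier W \<and>
     (\<forall>xs s. set xs \<subseteq> S \<longrightarrow> length xs = cox_len W S (wprod W xs) \<longrightarrow> s \<in> S \<longrightarrow>
        cox_len W S (s \<otimes>\<^bsub>W\<^esub> wprod W xs) \<le> cox_len W S (wprod W xs) \<longrightarrow>
        (\<exists>i < length xs. s \<otimes>\<^bsub>W\<^esub> wprod W xs = wprod W (take i xs @ drop (Suc i) xs)))"

definition building :: "('w, 'm) monoid_scheme \<Rightarrow> 'w set \<Rightarrow> 'c set \<Rightarrow> ('c \<Rightarrow> 'c \<Rightarrow> 'w) \<Rightarrow> bool" where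
  "building W S Ch \<delta> \<longleftrightarrow> coxeter_system W S \<and>
     (\<forall>C\<in>Ch. \<forall>D\<in>Ch. \<delta> C D \<in> carrier W) \<and>
     (\<forall>C\<in>Ch. \<forall>D\<in>Ch. \<delta> C D = \<one>\<^bsub>W\<^esub> \<longleftrightarrow> C = D) \<and>
     (\<forall>C\<in>Ch. \<forall>D\<in>Ch. \<forall>C'\<in>Ch. \<forall>s\<in>S. \<delta> C' C = s \<longrightarrow>
        \<delta> C' D \<in> {s \<otimes>\<^bsub>W\<^esub> \<delta> C D, \<delta> C D} \<and>
        (cox_len W S (s \<otimes>\<^bsub>W\<^esub> \<delta> C D) = cox_len W S (\<delta> C D) + 1 \<longrightarrow>
           \<delta> C' D = s \<otimes>\<^bsub>W\<^esub> \<delta> C D)) \<and>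
     (\<forall>C\<in>Ch. \<forall>D\<in>Ch. \<forall>s\<in>S. \<exists>C'\<in>Ch. \<delta> C' C = s \<and> \<delta> C' D = s \<otimes>\<^bsub>W\<^esub> \<delta> C D)"

text \<open>Thick: every panel contains at least three chambers, i.e. every chamber has
  at least two distinct s-adjacent chambers for each s in S.\<close>
definition thick_building :: "('w, 'm) monoid_scheme \<Rightarrow> 'w set \<Rightarrow> 'c set \<Rightarrow> ('c \<Rightarrow> 'c \<Rightarrow> 'w) \<Rightarrow> bool" where
  "thick_building W S Ch \<delta> \<longleftrightarrow> building W S Ch \<delta> \<and>
     (\<forall>C\<in>Ch. \<forall>s\<in>S. \<exists>D1\<in>Ch. \<exists>D2\<in>Ch. D1 \<noteq> D2 \<and> \<delta> C D1 = s \<and> \<delta> C D2 = s)"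

text \<open>The complete apartment system: all images of isometries from (W, \<delta>_W) into the building,
  where \<delta>_W(x,y) = x^{-1} y.\<close>
definition all_apartments :: "('w, 'm) monoid_scheme \<Rightarrow> 'c set \<Rightarrow> ('c \<Rightarrow> 'c \<Rightarrow> 'w) \<Rightarrow> 'c set set" where
  "all_apartments W Ch \<delta> = {\<Sigma>. \<Sigma> \<subseteq> Ch \<and> (\<exists>f. f ` carrier W = \<Sigma> \<and>
      (\<forall>x\<in>carrier W. \<forall>y\<in>carrier W. \<delta> (f x) (f y) = inv\<^bsub>W\<^esub> x \<otimes>\<^bsub>W\<^esub> y))}"

definition type_preserving_action ::
  "('g, 'n) monoid_scheme \<Rightarrow> 'c set \<Rightarrow> ('c \<Rightarrow> 'c \<Rightarrow> 'w) \<Rightarrow> ('g \<Rightarrow> 'c \<Rightarrow> 'c) \<Rightarrow> bool" where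
  "type_preserving_action G Ch \<delta> \<phi> \<longleftrightarrow> group_action G Ch \<phi> \<and>
     (\<forall>g\<in>carrier G. \<forall>C\<in>Ch. \<forall>D\<in>Ch. \<delta> (\<phi> g C) (\<phi> g D) = \<delta> C D)"

definition setwise_stab :: "'g set \<Rightarrow> ('g \<Rightarrow> 'c \<Rightarrow> 'c) \<Rightarrow> 'c set \<Rightarrow> 'g set" where
  "setwise_stab H \<phi> \<Sigma> = {h \<in> H. \<phi> h ` \<Sigma> = \<Sigma>}"

definition strongly_transitive ::
  "('g, 'n) monoid_scheme \<Rightarrow> ('g \<Rightarrow> 'c \<Rightarrow> 'c) \<Rightarrow> 'c set set \<Rightarrow> bool" where
  "strongly_transitive G \<phi> A \<longleftrightarrow>
     (\<forall>\<Sigma>\<in>A. \<forall>\<Sigma>'\<in>A. \<forall>C\<in>\<Sigma>. \<forall>C'\<in>\<Sigma>'. \<exists>g\<in>carrier G. \<phi> g ` \<Sigma> = \<Sigma>' \<and> \<phi> g C = C')"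

definition weakly_transitive ::
  "'g set \<Rightarrow> ('g \<Rightarrow> 'c \<Rightarrow> 'c) \<Rightarrow> 'c set set \<Rightarrow> bool" where
  "weakly_transitive H \<phi> Abar \<longleftrightarrow>
     (\<exists>\<Sigma>\<in>Abar. \<forall>C\<in>\<Sigma>. \<forall>D\<in>\<Sigma>. \<exists>h\<in>setwise_stab H \<phi> \<Sigma>. \<phi> h C = D)"

definition torsionfree_subgroup :: "'g set \<Rightarrow> ('g, 'n) monoid_scheme \<Rightarrow> bool" where
  "torsionfree_subgroup H G \<longleftrightarrow> subgroup H G \<and>
     (\<forall>h\<in>H. \<forall>k::nat. k > 0 \<longrightarrow> h [^]\<^bsub>G\<^esub> k = \<one>\<^bsub>G\<^esub> \<longrightarrow> h = \<one>\<^bsub>G\<^esub>)"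

end

theory Submission
  imports Defs
begin

text \<open>Let \<open>H\<close> be torsion-free and weakly transitive on an apartment \<open>\<Sigma>\<close>, and move \<open>\<Sigma>\<close> onto
  \<open>\<Sigma>\<^sub>0\<close> by strong transitivity, \<open>\<Sigma> = g \<Sigma>\<^sub>0\<close>. Since \<open>Stab\<^sub>H(\<Sigma>)\<close> is transitive on the chambers of
  \<open>\<Sigma>\<close>, some \<open>h\<close> in it satisfies \<open>g\<^sup>-\<^sup>1 h g C\<^sub>0 = n\<^sub>0 C\<^sub>0\<close> for a chamber \<open>C\<^sub>0\<close> of \<open>\<Sigma>\<^sub>0\<close>. An element
  of \<open>N\<close> fixing one chamber of \<open>\<Sigma>\<^sub>0\<close> fixes all of them, so \<open>g\<^sup>-\<^sup>1 h g \<in> n\<^sub>0T\<close>. Hence \<open>h\<close> has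
  finite order, so \<open>h = 1\<close>, and then \<open>n\<^sub>0 \<in> T\<close>, a contradiction.\<close>

definition pointwise_stab :: "'g set \<Rightarrow> ('g \<Rightarrow> 'c \<Rightarrow> 'c) \<Rightarrow> 'c set \<Rightarrow> 'g set" where
  "pointwise_stab H \<phi> \<Sigma> = {t \<in> setwise_stab H \<phi> \<Sigma>. \<forall>C\<in>\<Sigma>. \<phi> t C = C}"

lemma (in group) conj_nat_pow:
  assumes "g \<in> carrier G" "h \<in> carrier G"
  shows "(inv g \<otimes> h \<otimes> g) [^] (k::nat) = inv g \<otimes> h [^] k \<otimes> g"
proof (induction k)
  case 0
  then show ?case using assms by simp
next
  case (Suc k)
  have "(inv g \<otimes> h \<otimes> g) [^] Suc k = (inv g \<otimes> h [^] k \<otimes> g) \<otimes> (inv g \<otimes> h \<otimes> g)"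
    using Suc by simp
  also have "\<dots> = inv g \<otimes> h [^] k \<otimes> (g \<otimes> inv g) \<otimes> h \<otimes> g"
    using assms by (simp only: m_assoc nat_pow_closed inv_closed m_closed)
  also have "\<dots> = inv g \<otimes> h [^] Suc k \<otimes> g"
    using assms by (simp add: m_assoc)
  finally show ?case .
qed

lemma (in group) conj_eq_one_iff:
  assumes "g \<in> carrier G" "x \<in> carrier G"
  shows "inv g \<otimes> x \<otimes> g = \<one> \<longleftrightarrow> x = \<one>"
  using assms by (metis inv_closed inv_solve_left l_inv m_closed r_inv r_one)

lemma torsionfree_conj_pow_eq_one:
  fixes G (structure)
  assumes "group G" "torsionfree_subgroup H G" "h \<in> H" "g \<in> carrier G"
    and "k > 0" "(inv\<^bsub>G\<^esub> g \<otimes>\<^bsub>G\<^esub> h \<otimes>\<^bsub>G\<^esub> g) [^]\<^bsub>G\<^esub> (k::nat) = \<one>\<^bsub>G\<^esub>"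
  shows "h = \<one>\<^bsub>G\<^esub>"
proof -
  interpret group G by fact
  have H: "subgroup H G" and torsion: "\<forall>h\<in>H. \<forall>k::nat. k > 0 \<longrightarrow> h [^] k = \<one> \<longrightarrow> h = \<one>"
    using assms(2) unfolding torsionfree_subgroup_def by auto
  have "h \<in> carrier G" using subgroup.mem_carrier[OF H assms(3)] .
  then have "h [^] k = \<one>"
    using assms(4,6) by (simp add: conj_nat_pow conj_eq_one_iff)
  then show ?thesis using torsion assms(3,5) by blast
qed

lemma (in group_action) image_mult:
  assumes "A \<subseteq> E" "g \<in> carrier G" "h \<in> carrier G"
  shows "\<phi> (g \<otimes> h) ` A = \<phi> g ` \<phi> h ` A"
  using assms composition_rule by (auto simp: image_image subset_iff)

lemma (in group_action) image_inv:
  assumes "A \<subseteq> E" "g \<in> carrier G" "\<phi> g ` A = B"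
  shows "\<phi> (inv g) ` B = A"
  using assms orbit_sym_aux by (force simp: image_image subset_iff)

lemma (in group_action) inv_pointwise_stab:
  assumes "A \<subseteq> E" "t \<in> pointwise_stab (carrier G) \<phi> A"
  shows "inv t \<in> pointwise_stab (carrier G) \<phi> A"
proof -
  interpret group G
    using group_hom unfolding group_hom_def by blast
  show ?thesis
    using assms image_inv[of A t A] orbit_sym_aux
    unfolding pointwise_stab_def setwise_stab_def by (auto simp: subset_iff)
qed

lemma apartment_nonempty:
  assumes "group W" "\<Sigma> \<in> all_apartments W Ch \<delta>"
  shows "\<Sigma> \<noteq> {}"
  using assms monoid.one_closed[OF group.is_monoid] unfolding all_apartments_def by blast

lemma apartment_chamber_eq_if_dist_eq:
  assumes "group W" "\<Sigma> \<in> all_apartments W Ch \<delta>"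
    and "C \<in> \<Sigma>" "D \<in> \<Sigma>" "E \<in> \<Sigma>" "\<delta> C E = \<delta> C D"
  shows "E = D"
proof -
  interpret group W by fact
  from assms(2) obtain f where f: "f ` carrier W = \<Sigma>"
    and dist: "\<forall>x\<in>carrier W. \<forall>y\<in>carrier W. \<delta> (f x) (f y) = inv\<^bsub>W\<^esub> x \<otimes>\<^bsub>W\<^esub> y"
    unfolding all_apartments_def by blast
  obtain c d e where cde: "c \<in> carrier W" "d \<in> carrier W" "e \<in> carrier W"
    and "C = f c" "D = f d" "E = f e"
    using f assms(3-5) by blast
  then have "inv\<^bsub>W\<^esub> c \<otimes>\<^bsub>W\<^esub> e = inv\<^bsub>W\<^esub> c \<otimes>\<^bsub>W\<^esub> d"
    using dist assms(6) by metis
  then show ?thesis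
    using cde \<open>D = f d\<close> \<open>E = f e\<close> by simp
qed

lemma fixes_apartment_if_fixes_chamber:
  assumes act: "type_preserving_action G Ch \<delta> \<phi>" and "group W"
    and apt: "\<Sigma> \<in> all_apartments W Ch \<delta>"
    and t: "t \<in> carrier G" "\<phi> t ` \<Sigma> = \<Sigma>"
    and C: "C \<in> \<Sigma>" "\<phi> t C = C"
  shows "t \<in> pointwise_stab (carrier G) \<phi> \<Sigma>"
proof -
  have "\<phi> t D = D" if D: "D \<in> \<Sigma>" for D
  proof -
    have "\<Sigma> \<subseteq> Ch" using apt unfolding all_apartments_def by blast
    then have "\<delta> C (\<phi> t D) = \<delta> C D"
      using act t(1) C D unfolding type_preserving_action_def by (metis subsetD)
    moreover have "\<phi> t D \<in> \<Sigma>" using t(2) D by blast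
    ultimately show ?thesis
      using apartment_chamber_eq_if_dist_eq[OF \<open>group W\<close> apt C(1) D] by blast
  qed
  then show ?thesis
    using t unfolding pointwise_stab_def setwise_stab_def by blast
qed

lemma weakly_transitive_conj_in_coset:
  fixes G (structure)
  assumes "group W"
    and act: "type_preserving_action G Ch \<delta> \<phi>"
    and strong: "strongly_transitive G \<phi> (all_apartments W Ch \<delta>)"
    and apt\<^sub>0: "\<Sigma>\<^sub>0 \<in> all_apartments W Ch \<delta>"
    and weak: "weakly_transitive H \<phi> (all_apartments W Ch \<delta>)"
    and "H \<subseteq> carrier G"
    and n: "n \<in> setwise_stab (carrier G) \<phi> \<Sigma>\<^sub>0"
  obtains g h t where "g \<in> carrier G" "h \<in> H" "t \<in> pointwise_stab (carrier G) \<phi> \<Sigma>\<^sub>0"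
    "inv g \<otimes> h \<otimes> g = n \<otimes> t"
proof -
  interpret group_action G Ch \<phi>
    using act unfolding type_preserving_action_def by blast
  interpret group G
    using group_hom unfolding group_hom_def by blast
  obtain \<Sigma> where apt: "\<Sigma> \<in> all_apartments W Ch \<delta>"
    and trans: "\<forall>C\<in>\<Sigma>. \<forall>D\<in>\<Sigma>. \<exists>h\<in>setwise_stab H \<phi> \<Sigma>. \<phi> h C = D"
    using weak unfolding weakly_transitive_def by blast
  have sub: "\<Sigma>\<^sub>0 \<subseteq> Ch" "\<Sigma> \<subseteq> Ch"
    using apt\<^sub>0 apt unfolding all_apartments_def by auto
  obtain C\<^sub>0 D\<^sub>0 where C\<^sub>0: "C\<^sub>0 \<in> \<Sigma>\<^sub>0" and "D\<^sub>0 \<in> \<Sigma>"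
    using apartment_nonempty[OF \<open>group W\<close>] apt\<^sub>0 apt by blast
  then obtain g where g: "g \<in> carrier G" "\<phi> g ` \<Sigma>\<^sub>0 = \<Sigma>"
    using strong apt\<^sub>0 apt unfolding strongly_transitive_def by blast
  have nG: "n \<in> carrier G" and n\<Sigma>: "\<phi> n ` \<Sigma>\<^sub>0 = \<Sigma>\<^sub>0"
    using n unfolding setwise_stab_def by auto
  have "\<phi> g C\<^sub>0 \<in> \<Sigma>" "\<phi> g (\<phi> n C\<^sub>0) \<in> \<Sigma>"
    using g n\<Sigma> C\<^sub>0 by auto
  then obtain h where h: "h \<in> H" "\<phi> h ` \<Sigma> = \<Sigma>" and hC: "\<phi> h (\<phi> g C\<^sub>0) = \<phi> g (\<phi> n C\<^sub>0)"
    using trans unfolding setwise_stab_def by blast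
  have hG: "h \<in> carrier G" using h(1) \<open>H \<subseteq> carrier G\<close> by blast
  define t where "t = inv n \<otimes> (inv g \<otimes> h \<otimes> g)"
  have tG: "t \<in> carrier G" using nG g hG unfolding t_def by simp
  have "\<phi> t ` \<Sigma>\<^sub>0 = \<phi> (inv n) ` \<phi> (inv g) ` \<phi> h ` \<phi> g ` \<Sigma>\<^sub>0"
    using sub g hG nG unfolding t_def by (simp add: image_mult surj_prop image_mono)
  also have "\<dots> = \<Sigma>\<^sub>0"
    using image_inv[OF sub(1) g] image_inv[OF sub(1) nG n\<Sigma>] g h by simp
  finally have t\<Sigma>: "\<phi> t ` \<Sigma>\<^sub>0 = \<Sigma>\<^sub>0" .
  have "C\<^sub>0 \<in> Ch" "\<phi> n C\<^sub>0 \<in> Ch" "\<phi> g C\<^sub>0 \<in> Ch"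
    using C\<^sub>0 sub(1) nG g(1) element_image by blast+
  then have "\<phi> t C\<^sub>0 = \<phi> (inv n) (\<phi> (inv g) (\<phi> g (\<phi> n C\<^sub>0)))"
    using g hG nG hC unfolding t_def by (simp add: composition_rule)
  also have "\<dots> = C\<^sub>0"
    using \<open>C\<^sub>0 \<in> Ch\<close> \<open>\<phi> n C\<^sub>0 \<in> Ch\<close> g nG orbit_sym_aux by simp
  finally have "\<phi> t C\<^sub>0 = C\<^sub>0" .
  then have "t \<in> pointwise_stab (carrier G) \<phi> \<Sigma>\<^sub>0"
    using fixes_apartment_if_fixes_chamber[OF act \<open>group W\<close> apt\<^sub>0 tG t\<Sigma> C\<^sub>0] by blast
  moreover have "inv g \<otimes> h \<otimes> g = n \<otimes> t"
    using nG g hG unfolding t_def by (simp flip: m_assoc)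
  ultimately show ?thesis using that g(1) h(1) by blast
qed

theorem corollary2p4:
  fixes W :: "('w, 'm) monoid_scheme" and S :: "'w set"
    and Ch :: "'c set" and \<delta> :: "'c \<Rightarrow> 'c \<Rightarrow> 'w"
    and G :: "('g, 'n) monoid_scheme" and \<phi> :: "'g \<Rightarrow> 'c \<Rightarrow> 'c"
    and \<Sigma>\<^sub>0 :: "'c set"
  assumes thick: "thick_building W S Ch \<delta>"
    and grp: "group G"
    and act: "type_preserving_action G Ch \<delta> \<phi>"
    and strong: "strongly_transitive G \<phi> (all_apartments W Ch \<delta>)"
    and apt: "\<Sigma>\<^sub>0 \<in> all_apartments W Ch \<delta>"
    and tors: "\<exists>n\<^sub>0 \<in> setwise_stab (carrier G) \<phi> \<Sigma>\<^sub>0 -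
                  {t \<in> setwise_stab (carrier G) \<phi> \<Sigma>\<^sub>0. \<forall>C\<in>\<Sigma>\<^sub>0. \<phi> t C = C}.
               \<forall>t \<in> {t \<in> setwise_stab (carrier G) \<phi> \<Sigma>\<^sub>0. \<forall>C\<in>\<Sigma>\<^sub>0. \<phi> t C = C}.
                 \<exists>k::nat. k > 0 \<and> (n\<^sub>0 \<otimes>\<^bsub>G\<^esub> t) [^]\<^bsub>G\<^esub> k = \<one>\<^bsub>G\<^esub>"
  shows "\<not> (\<exists>H. torsionfree_subgroup H G \<and> weakly_transitive H \<phi> (all_apartments W Ch \<delta>))"
proof
  assume "\<exists>H. torsionfree_subgroup H G \<and> weakly_transitive H \<phi> (all_apartments W Ch \<delta>)"
  then obtain H where tf: "torsionfree_subgroup H G" and weak: "weakly_transitive H \<phi> (all_apartments W Ch \<delta>)"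
    by blast
  interpret group G by fact
  interpret group_action G Ch \<phi>
    using act unfolding type_preserving_action_def by blast
  have "group W"
    using thick unfolding thick_building_def building_def coxeter_system_def by blast
  have "H \<subseteq> carrier G"
    using tf unfolding torsionfree_subgroup_def by (simp add: subgroup.subset)
  obtain n\<^sub>0 where n\<^sub>0: "n\<^sub>0 \<in> setwise_stab (carrier G) \<phi> \<Sigma>\<^sub>0" "n\<^sub>0 \<notin> pointwise_stab (carrier G) \<phi> \<Sigma>\<^sub>0"
    and finite_order: "\<forall>t \<in> pointwise_stab (carrier G) \<phi> \<Sigma>\<^sub>0. \<exists>k::nat. k > 0 \<and> (n\<^sub>0 \<otimes>\<^bsub>G\<^esub> t) [^]\<^bsub>G\<^esub> k = \<one>\<^bsub>G\<^esub>"
    using tors unfolding pointwise_stab_def by blast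
  obtain g h t where g: "g \<in> carrier G" and "h \<in> H" and t: "t \<in> pointwise_stab (carrier G) \<phi> \<Sigma>\<^sub>0"
    and conj: "inv\<^bsub>G\<^esub> g \<otimes>\<^bsub>G\<^esub> h \<otimes>\<^bsub>G\<^esub> g = n\<^sub>0 \<otimes>\<^bsub>G\<^esub> t"
    using weakly_transitive_conj_in_coset[OF \<open>group W\<close> act strong apt weak \<open>H \<subseteq> carrier G\<close> n\<^sub>0(1)] .
  obtain k :: nat where "k > 0" "(n\<^sub>0 \<otimes>\<^bsub>G\<^esub> t) [^]\<^bsub>G\<^esub> k = \<one>\<^bsub>G\<^esub>"
    using finite_order t by blast
  then have "h = \<one>\<^bsub>G\<^esub>"
    using torsionfree_conj_pow_eq_one[OF grp tf \<open>h \<in> H\<close> g] conj by simp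
  then have "n\<^sub>0 \<otimes>\<^bsub>G\<^esub> t = \<one>\<^bsub>G\<^esub>"
    using conj g by simp
  then have "n\<^sub>0 = inv\<^bsub>G\<^esub> t"
    using n\<^sub>0(1) t unfolding setwise_stab_def pointwise_stab_def by (simp add: inv_equality)
  moreover have "\<Sigma>\<^sub>0 \<subseteq> Ch"
    using apt unfolding all_apartments_def by blast
  ultimately have "n\<^sub>0 \<in> pointwise_stab (carrier G) \<phi> \<Sigma>\<^sub>0"
    using inv_pointwise_stab t by simp
  then show False using n\<^sub>0(2) by contradiction
qed

end
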